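(* Let $F\colon[a,b]\to\mathbb{R}$ and $f\colon[a,b]\to\mathbb{R}$ be such that $LD_1F(x)=f(x)$ for all $x\in[a,b]$. If $f$ is Laplace integrable on $[a,b]$, then $\int_a^xf=F(x)-F(a)$ for all $x\in[a,b]$.
   Context: Laplace derivative: for $F$ Perron integrable near $x$, $LD_1F(x)$ is the common value, when both exist and are equal, of $\lim_{s\to\infty}s^2\int_0^\delta e^{-st}[F(x+t)-F(x)]dt$ and $\lim_{s\to\infty}(-s^2)\int_0^\delta e^{-st}[F(x-t)-F(x)]dt$ for some $\delta>0$ (one-sided at endpoints). Lower/upper derivates $\underline{LD}_1,\overline{LD}_1$ use $\liminf$/$\limsup$, minimum/maximum over the two sides. Laplace integral: a major function of $f$ is a continuous $U$ on $[a,b]$ with $\underline{LD}_1U\geqslant f$ and $\underline{LD}_1U>-\infty$ everywhere; a minor function is a continuous $V$ with $\overline{LD}_1V\leqslant f$ and $\overline{LD}_1V<\infty$ everywhere; $f$ is Laplace integrable if $\sup_V(V(b)-V(a))=\inf_U(U(b)-U(a))$ is finite, the value being $\int_a^bf$. *)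

theory Defs
  imports "HOL-Analysis.Analysis"
begin

text \<open>Perron integrals are rendered by the (equivalent) Henstock--Kurzweil integral
  of HOL-Analysis.  The right / left Laplace expressions with parameter s:\<close>

definition lap_R :: "(real \<Rightarrow> real) \<Rightarrow> real \<Rightarrow> real \<Rightarrow> real \<Rightarrow> real" where
  "lap_R F x \<delta> s = s\<^sup>2 * integral {0..\<delta>} (\<lambda>t. exp (- s * t) * (F (x + t) - F x))"

definition lap_L :: "(real \<Rightarrow> real) \<Rightarrow> real \<Rightarrow> real \<Rightarrow> real \<Rightarrow> real" where
  "lap_L F x \<delta> s = - (s\<^sup>2) * integral {0..\<delta>} (\<lambda>t. exp (- s * t) * (F (x - t) - F x))"

definition lap_adm :: "real \<Rightarrow> real \<Rightarrow> (real \<Rightarrow> real) \<Rightarrow> real \<Rightarrow> real \<Rightarrow> bool" where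
  "lap_adm a b F x \<delta> \<longleftrightarrow> \<delta> > 0
     \<and> (x < b \<longrightarrow> x + \<delta> \<le> b \<and> F integrable_on {x..x + \<delta>})
     \<and> (a < x \<longrightarrow> a \<le> x - \<delta> \<and> F integrable_on {x - \<delta>..x})"

definition has_LD1 :: "real \<Rightarrow> real \<Rightarrow> (real \<Rightarrow> real) \<Rightarrow> real \<Rightarrow> real \<Rightarrow> bool" where
  "has_LD1 a b F x D \<longleftrightarrow> (\<exists>\<delta>. lap_adm a b F x \<delta>
     \<and> (x < b \<longrightarrow> (lap_R F x \<delta> \<longlongrightarrow> D) at_top)
     \<and> (a < x \<longrightarrow> (lap_L F x \<delta> \<longlongrightarrow> D) at_top))"

text \<open>Lower / upper Laplace derivates (extended-real valued): minimum / maximum over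
  the available sides of liminf / limsup as s \<rightarrow> \<infinity>.\<close>

definition lower_LD1 :: "real \<Rightarrow> real \<Rightarrow> (real \<Rightarrow> real) \<Rightarrow> real \<Rightarrow> real \<Rightarrow> ereal" where
  "lower_LD1 a b F x \<delta> = Inf ({Liminf at_top (\<lambda>s. ereal (lap_R F x \<delta> s)) | _::unit. x < b}
                           \<union> {Liminf at_top (\<lambda>s. ereal (lap_L F x \<delta> s)) | _::unit. a < x})"

definition upper_LD1 :: "real \<Rightarrow> real \<Rightarrow> (real \<Rightarrow> real) \<Rightarrow> real \<Rightarrow> real \<Rightarrow> ereal" where
  "upper_LD1 a b F x \<delta> = Sup ({Limsup at_top (\<lambda>s. ereal (lap_R F x \<delta> s)) | _::unit. x < b}
                           \<union> {Limsup at_top (\<lambda>s. ereal (lap_L F x \<delta> s)) | _::unit. a < x})"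

definition lap_major :: "real \<Rightarrow> real \<Rightarrow> (real \<Rightarrow> real) \<Rightarrow> (real \<Rightarrow> real) \<Rightarrow> bool" where
  "lap_major a b f U \<longleftrightarrow> continuous_on {a..b} U \<and>
     (\<forall>x\<in>{a..b}. \<exists>\<delta>. lap_adm a b U x \<delta>
        \<and> lower_LD1 a b U x \<delta> \<ge> ereal (f x) \<and> lower_LD1 a b U x \<delta> > - \<infinity>)"

definition lap_minor :: "real \<Rightarrow> real \<Rightarrow> (real \<Rightarrow> real) \<Rightarrow> (real \<Rightarrow> real) \<Rightarrow> bool" where
  "lap_minor a b f V \<longleftrightarrow> continuous_on {a..b} V \<and>
     (\<forall>x\<in>{a..b}. \<exists>\<delta>. lap_adm a b V x \<delta>
        \<and> upper_LD1 a b V x \<delta> \<le> ereal (f x) \<and> upper_LD1 a b V x \<delta> < \<infinity>)"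

definition lap_integrable :: "real \<Rightarrow> real \<Rightarrow> (real \<Rightarrow> real) \<Rightarrow> bool" where
  "lap_integrable a b f \<longleftrightarrow>
     (let Mj = {U b - U a | U. lap_major a b f U}; Mn = {V b - V a | V. lap_minor a b f V} in
      Sup (ereal ` Mn) = Inf (ereal ` Mj) \<and> \<bar>Inf (ereal ` Mj)\<bar> \<noteq> \<infinity>)"

definition lap_integral :: "real \<Rightarrow> real \<Rightarrow> (real \<Rightarrow> real) \<Rightarrow> real" where
  "lap_integral a b f = real_of_ereal (Inf (ereal ` {U b - U a | U. lap_major a b f U}))"

end

theory Submission
  imports Defs "HOL-Real_Asymp.Real_Asymp"
begin

(* The heart of the proof is a monotonicity theorem: if G is integrable on [p, q] and its lower
   right and left Laplace derivates are nonnegative at every point, then G p <= G q.  Otherwise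
   let L be the affine function with L p = G p and L q = G q, of slope -e < 0, and let x maximise
   y |-> integral_p^y (G - L).  Then integral_x^(x+t) G <= (L x) t - e t^2 / 2 and
   integral_(x-t)^x G >= (L x) t + e t^2 / 2 for small t >= 0, and comparing Laplace transforms
   turns these bounds into G x < L x if x < q and L x < G x if p < x, which is absurd.

   Applied to U - F for a major function U and to F - V for a minor function V, it gives
   V x - V a <= F x - F a <= U x - U a on every [a, x].  Integrability on [a, b] lets these
   increments approach F b - F a, and since U - F and F - V are nondecreasing, the same U and V
   are nearly optimal on [a, x]. *)

section \<open>Symmetries of the Laplace expressions\<close>

(* Left-sided statements below are reduced to right-sided ones through this identity. *)
lemma lap_L_reflect: "lap_L G x d = lap_R (\<lambda>z. - G (- z)) (- x) d"
proof
  fix s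
  have "(\<lambda>t. exp (- s * t) * (- G (- (- x + t)) - - G (- (- x))))
      = (\<lambda>t. - (exp (- s * t) * (G (x - t) - G x)))"
    by (simp add: algebra_simps)
  then show "lap_L G x d s = lap_R (\<lambda>z. - G (- z)) (- x) d s"
    by (simp add: lap_L_def lap_R_def)
qed

lemma lap_R_uminus: "lap_R (\<lambda>z. - G z) x d s = - lap_R G x d s"
proof -
  have "(\<lambda>t. exp (- s * t) * (- G (x + t) - - G x)) = (\<lambda>t. - (exp (- s * t) * (G (x + t) - G x)))"
    by (simp add: algebra_simps)
  then show ?thesis by (simp add: lap_R_def)
qed

lemma lap_L_uminus: "lap_L (\<lambda>z. - G z) x d s = - lap_L G x d s"
  using lap_R_uminus[of "\<lambda>z. - G (- z)" "- x" d s] by (simp add: lap_L_reflect)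

lemma integrable_reflect_uminus:
  fixes G :: "real \<Rightarrow> real"
  assumes "G integrable_on {x - d..x}"
  shows "(\<lambda>z. - G (- z)) integrable_on {- x..- x + d}"
  using integrable_neg[OF iffD2[OF Henstock_Kurzweil_Integration.integrable_reflect_real assms]] by simp

lemma integral_reflect_uminus:
  fixes G :: "real \<Rightarrow> real"
  shows "integral {- x..- x + d} (\<lambda>z. - G (- z)) = - integral {x - d..x} G"
  using Henstock_Kurzweil_Integration.integral_reflect_real[of x "x - d" G] by simp

lemma integral_shift_origin:
  fixes G :: "real \<Rightarrow> real"
  assumes "G integrable_on {y..y + d}"
  shows "(\<lambda>t. G (y + t)) integrable_on {0..d}"
    and "integral {0..d} (\<lambda>t. G (y + t)) = integral {y..y + d} G"
  using assms integrable_on_shift_Icc_real[of G y 0 d] integral_shift_Icc_real[of 0 d G y]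
  by (simp_all add: o_def add.commute)

section \<open>Exponentially weighted integrals\<close>

lemma integrable_exp_weight:
  fixes h :: "real \<Rightarrow> real"
  assumes "h integrable_on {u..v}" "0 \<le> s"
  shows "(\<lambda>t. exp (- s * t) * h t) integrable_on {u..v}"
proof (cases "u \<le> v")
  case True
  obtain c where "((\<lambda>t. (- exp (- s * t)) * h t) has_integral
      (- exp (- s * u)) * integral {u..c} h + (- exp (- s * v)) * integral {c..v} h) {u..v}"
    using second_mean_value_theorem_full[OF assms(1) True, where g="\<lambda>t. - exp (- s * t)"] assms(2)
    by (auto simp: mult_left_mono)
  from has_integral_neg[OF this] show ?thesis by auto
qed (simp add: integrable_on_empty)

lemma integral_decreasing_weight_nonpos:
  fixes K w :: "real \<Rightarrow> real"
  assumes K: "K integrable_on {0..d}" and "0 \<le> d"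
    and K_nonpos: "\<And>t. 0 \<le> t \<Longrightarrow> t \<le> d \<Longrightarrow> integral {0..t} K \<le> 0"
    and w_decr: "\<And>x y. 0 \<le> x \<Longrightarrow> x \<le> y \<Longrightarrow> y \<le> d \<Longrightarrow> w y \<le> w x"
    and w_nonneg: "0 \<le> w d"
  shows "integral {0..d} (\<lambda>t. w t * K t) \<le> 0"
proof -
  obtain c where c: "c \<in> {0..d}" and hi: "((\<lambda>t. (- w t) * K t) has_integral
      (- w 0) * integral {0..c} K + (- w d) * integral {c..d} K) {0..d}"
    using second_mean_value_theorem_full[OF K \<open>0 \<le> d\<close>, where g="\<lambda>t. - w t"] w_decr by auto
  have split: "integral {c..d} K = integral {0..d} K - integral {0..c} K"
    using Henstock_Kurzweil_Integration.integral_combine[of 0 c d K] c K by auto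
  have "w 0 * integral {0..c} K + w d * integral {c..d} K
      = (w 0 - w d) * integral {0..c} K + w d * integral {0..d} K"
    unfolding split by (simp add: algebra_simps)
  then have "((\<lambda>t. w t * K t) has_integral
      (w 0 - w d) * integral {0..c} K + w d * integral {0..d} K) {0..d}"
    using has_integral_neg[OF hi] by (simp add: add.commute)
  moreover have "(w 0 - w d) * integral {0..c} K + w d * integral {0..d} K \<le> 0"
    using w_decr[of 0 d] K_nonpos[of c] K_nonpos[of d] c \<open>0 \<le> d\<close> w_nonneg
    by (simp add: add_nonpos_nonpos mult_nonneg_nonpos)
  ultimately show ?thesis by (simp add: integral_unique)
qed

lemma has_integral_linear:
  fixes A e :: real
  assumes "0 \<le> d"
  shows "((\<lambda>t. A - e * t) has_integral A * d - e * d\<^sup>2 / 2) {0..d}"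
proof -
  have "((\<lambda>t. A - e * t) has_integral (A * d - e * d\<^sup>2 / 2) - (A * 0 - e * 0\<^sup>2 / 2)) {0..d}"
    using assms by (intro fundamental_theorem_of_calculus)
      (auto intro!: derivative_eq_intros simp: has_real_derivative_iff_has_vector_derivative[symmetric])
  then show ?thesis by simp
qed

lemma has_integral_exp_linear:
  fixes A e :: real
  assumes "0 < s" "0 \<le> d"
  shows "((\<lambda>t. exp (- s * t) * (A - e * t)) has_integral
     (A * s * (1 - exp (- s * d)) - e * (1 - exp (- s * d) * (1 + s * d))) / s\<^sup>2) {0..d}"
proof -
  define P where "P t = (e * exp (- s * t) * (1 + s * t) - A * s * exp (- s * t)) / s\<^sup>2" for t
  have "((\<lambda>t. exp (- s * t) * (A - e * t)) has_integral P d - P 0) {0..d}"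
  proof (rule fundamental_theorem_of_calculus[OF assms(2)])
    fix t assume "t \<in> {0..d}"
    have "(P has_real_derivative exp (- s * t) * (A - e * t)) (at t)"
      unfolding P_def
      by (rule derivative_eq_intros refl | use assms in \<open>simp add: field_simps power2_eq_square\<close>)+
    then show "(P has_vector_derivative exp (- s * t) * (A - e * t)) (at t within {0..d})"
      by (simp add: has_real_derivative_iff_has_vector_derivative has_vector_derivative_at_within)
  qed
  moreover have "P d - P 0
      = (A * s * (1 - exp (- s * d)) - e * (1 - exp (- s * d) * (1 + s * d))) / s\<^sup>2"
    using assms by (simp add: P_def field_simps)
  ultimately show ?thesis by simp
qed

lemma laplace_le_of_integral_le:
  fixes h :: "real \<Rightarrow> real"
  assumes h: "h integrable_on {0..d}" and "0 \<le> d" "A \<le> 0" "0 < s"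
    and bound: "\<And>t. 0 \<le> t \<Longrightarrow> t \<le> d \<Longrightarrow> integral {0..t} h \<le> A * t - e * t\<^sup>2 / 2"
  shows "s\<^sup>2 * integral {0..d} (\<lambda>t. exp (- s * t) * h t) \<le> - e * (1 - exp (- s * d) * (1 + s * d))"
proof -
  define K where "K t = h t - (A - e * t)" for t
  have K: "K integrable_on {0..t}" "integral {0..t} K = integral {0..t} h - (A * t - e * t\<^sup>2 / 2)"
    if "0 \<le> t" "t \<le> d" for t
  proof -
    have "h integrable_on {0..t}"
      using integrable_subinterval_real[OF h] that by auto
    then have "(K has_integral integral {0..t} h - (A * t - e * t\<^sup>2 / 2)) {0..t}"
      unfolding K_def by (rule has_integral_diff[OF integrable_integral has_integral_linear[OF \<open>0 \<le> t\<close>]])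
    then show "K integrable_on {0..t}" "integral {0..t} K = integral {0..t} h - (A * t - e * t\<^sup>2 / 2)"
      by (auto simp: integral_unique)
  qed
  have "integral {0..d} (\<lambda>t. exp (- s * t) * K t) \<le> 0"
    using integral_decreasing_weight_nonpos[OF K(1)[OF \<open>0 \<le> d\<close> order_refl] \<open>0 \<le> d\<close>]
      K(2) bound \<open>0 < s\<close> by (auto simp: mult_left_mono)
  then have "s\<^sup>2 * integral {0..d} (\<lambda>t. exp (- s * t) * K t) \<le> 0"
    by (simp add: mult_nonneg_nonpos)
  moreover have "((\<lambda>t. exp (- s * t) * h t) has_integral
      integral {0..d} (\<lambda>t. exp (- s * t) * K t)
      + (A * s * (1 - exp (- s * d)) - e * (1 - exp (- s * d) * (1 + s * d))) / s\<^sup>2) {0..d}"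
  proof -
    have "(\<lambda>t. exp (- s * t) * K t) integrable_on {0..d}"
      using integrable_exp_weight[OF K(1), of d s] \<open>0 \<le> d\<close> \<open>0 < s\<close> by simp
    from has_integral_add[OF integrable_integral[OF this]
        has_integral_exp_linear[OF \<open>0 < s\<close> \<open>0 \<le> d\<close>, of A e]]
    show ?thesis by (simp add: K_def algebra_simps)
  qed
  moreover have "A * s * (1 - exp (- s * d)) \<le> 0"
    using \<open>A \<le> 0\<close> \<open>0 < s\<close> \<open>0 \<le> d\<close> by (intro mult_nonpos_nonneg) auto
  ultimately show ?thesis
    using \<open>0 < s\<close> by (simp add: integral_unique distrib_left mult_nonpos_nonneg)
qed

lemma laplace_eventually_less:
  fixes h :: "real \<Rightarrow> real"
  assumes h: "h integrable_on {0..d}" and "0 < d" "A \<le> 0" "0 < e"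
    and bound: "\<And>t. 0 \<le> t \<Longrightarrow> t \<le> d \<Longrightarrow> integral {0..t} h \<le> A * t - e * t\<^sup>2 / 2"
  shows "\<forall>\<^sub>F s in at_top. s\<^sup>2 * integral {0..d} (\<lambda>t. exp (- s * t) * h t) < - e / 2"
proof -
  have "((\<lambda>s. exp (- s * d) * (1 + s * d)) \<longlongrightarrow> 0) at_top"
    using \<open>0 < d\<close> by real_asymp
  then have "\<forall>\<^sub>F s in at_top. exp (- s * d) * (1 + s * d) < 1 / 2"
    by (rule order_tendstoD) simp
  with eventually_gt_at_top[of 0] show ?thesis
  proof eventually_elim
    case (elim s)
    have "e * (exp (- s * d) * (1 + s * d)) < e * (1 / 2)"
      using elim(2) \<open>0 < e\<close> by (rule mult_strict_left_mono)
    then have "- e * (1 - exp (- s * d) * (1 + s * d)) < - e / 2"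
      by (simp add: algebra_simps)
    with laplace_le_of_integral_le[OF h _ \<open>A \<le> 0\<close> elim(1) bound] \<open>0 < d\<close> show ?case
      by simp
  qed
qed

lemma abs_integral_exp_weight_le:
  fixes h :: "real \<Rightarrow> real"
  assumes h: "h integrable_on {u..v}" and "u \<le> v" "0 \<le> s"
    and B: "\<And>x y. u \<le> x \<Longrightarrow> x \<le> y \<Longrightarrow> y \<le> v \<Longrightarrow> \<bar>integral {x..y} h\<bar> \<le> B"
  shows "\<bar>integral {u..v} (\<lambda>t. exp (- s * t) * h t)\<bar> \<le> 2 * B * exp (- s * u)"
proof -
  obtain c where c: "c \<in> {u..v}" and hi: "((\<lambda>t. (- exp (- s * t)) * h t) has_integral
      (- exp (- s * u)) * integral {u..c} h + (- exp (- s * v)) * integral {c..v} h) {u..v}"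
    using second_mean_value_theorem_full[OF h \<open>u \<le> v\<close>, where g="\<lambda>t. - exp (- s * t)"] \<open>0 \<le> s\<close>
    by (auto simp: mult_left_mono)
  have "integral {u..v} (\<lambda>t. exp (- s * t) * h t)
      = exp (- s * u) * integral {u..c} h + exp (- s * v) * integral {c..v} h"
    using integral_unique[OF has_integral_neg[OF hi]] by simp
  moreover have "\<bar>exp (- s * u) * integral {u..c} h\<bar> \<le> exp (- s * u) * B"
    using B[of u c] c by (simp add: abs_mult)
  moreover have "\<bar>exp (- s * v) * integral {c..v} h\<bar> \<le> exp (- s * u) * B"
  proof -
    have "exp (- s * v) \<le> exp (- s * u)"
      using \<open>u \<le> v\<close> \<open>0 \<le> s\<close> by (simp add: mult_left_mono)
    moreover have "\<bar>integral {c..v} h\<bar> \<le> B"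
      using B[of c v] c by auto
    ultimately show ?thesis by (simp add: abs_mult mult_mono)
  qed
  ultimately have "\<bar>integral {u..v} (\<lambda>t. exp (- s * t) * h t)\<bar> \<le> exp (- s * u) * B + exp (- s * u) * B"
    using abs_triangle_ineq[of "exp (- s * u) * integral {u..c} h" "exp (- s * v) * integral {c..v} h"]
    by linarith
  then show ?thesis
    by (simp add: algebra_simps)
qed

lemma laplace_truncation_tendsto_zero:
  fixes h :: "real \<Rightarrow> real"
  assumes h: "h integrable_on {0..d}" and "0 < \<tau>" "\<tau> \<le> d"
  shows "((\<lambda>s. s\<^sup>2 * integral {0..d} (\<lambda>t. exp (- s * t) * h t)
              - s\<^sup>2 * integral {0..\<tau>} (\<lambda>t. exp (- s * t) * h t)) \<longlongrightarrow> 0) at_top"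
proof -
  have h_tail: "h integrable_on {\<tau>..d}"
    using integrable_subinterval_real[OF h] \<open>0 < \<tau>\<close> by auto
  obtain B where B: "\<And>x y. \<tau> \<le> x \<Longrightarrow> x \<le> y \<Longrightarrow> y \<le> d \<Longrightarrow> \<bar>integral {x..y} h\<bar> \<le> B"
  proof -
    have "bounded {integral (cbox x y) h |x y. cbox x y \<subseteq> cbox \<tau> d}"
      using bounded_integrals_over_subintervals[OF h_tail[unfolded cbox_interval[symmetric]]] .
    then obtain B where "\<And>z. z \<in> {integral (cbox x y) h |x y. cbox x y \<subseteq> cbox \<tau> d} \<Longrightarrow> norm z \<le> B"
      by (auto simp: bounded_iff)
    then show ?thesis by (intro that[of B]) fastforce
  qed
  have "\<forall>\<^sub>F s in at_top. norm (s\<^sup>2 * integral {0..d} (\<lambda>t. exp (- s * t) * h t)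
      - s\<^sup>2 * integral {0..\<tau>} (\<lambda>t. exp (- s * t) * h t)) \<le> 2 * B * (s\<^sup>2 * exp (- s * \<tau>))"
    using eventually_ge_at_top[of 0]
  proof eventually_elim
    case (elim s)
    have "integral {0..d} (\<lambda>t. exp (- s * t) * h t) - integral {0..\<tau>} (\<lambda>t. exp (- s * t) * h t)
        = integral {\<tau>..d} (\<lambda>t. exp (- s * t) * h t)"
      using Henstock_Kurzweil_Integration.integral_combine[of 0 \<tau> d, OF _ _ integrable_exp_weight[OF h elim]]
        \<open>0 < \<tau>\<close> \<open>\<tau> \<le> d\<close> by auto
    moreover have "s\<^sup>2 * \<bar>integral {\<tau>..d} (\<lambda>t. exp (- s * t) * h t)\<bar> \<le> s\<^sup>2 * (2 * B * exp (- s * \<tau>))"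
      using abs_integral_exp_weight_le[OF h_tail \<open>\<tau> \<le> d\<close> elim B] by (simp add: mult_left_mono)
    ultimately show ?case
      by (simp add: abs_mult algebra_simps flip: right_diff_distrib)
  qed
  moreover have "((\<lambda>s. 2 * B * (s\<^sup>2 * exp (- s * \<tau>))) \<longlongrightarrow> 0) at_top"
    using \<open>0 < \<tau>\<close> by real_asymp
  ultimately show ?thesis
    by (rule Lim_null_comparison)
qed

section \<open>A monotonicity theorem for Laplace derivates\<close>

lemma lap_R_nonneg_imp_less:
  fixes G :: "real \<Rightarrow> real"
  assumes G: "G integrable_on {x..x + d}" and "0 < d" "0 < e"
    and bound: "\<And>t. 0 \<le> t \<Longrightarrow> t \<le> d \<Longrightarrow> integral {x..x + t} G \<le> c * t - e * t\<^sup>2 / 2"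
    and nonneg: "0 \<le> Liminf at_top (\<lambda>s. ereal (lap_R G x d s))"
  shows "G x < c"
proof (rule ccontr)
  assume "\<not> G x < c"
  define h where "h t = G (x + t) - G x" for t
  have h: "h integrable_on {0..t}" "integral {0..t} h = integral {x..x + t} G - G x * t"
    if "0 \<le> t" "t \<le> d" for t
  proof -
    have "G integrable_on {x..x + t}"
      using integrable_subinterval_real[OF G] that by auto
    from has_integral_diff[OF integrable_integral[OF integral_shift_origin(1)[OF this]]
        has_integral_const_real[where c="G x" and a=0 and b=t]] integral_shift_origin(2)[OF this]
    have "(h has_integral integral {x..x + t} G - G x * t) {0..t}"
      unfolding h_def using that by (simp add: mult.commute)
    then show "h integrable_on {0..t}" "integral {0..t} h = integral {x..x + t} G - G x * t"
      by (auto simp: integral_unique)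
  qed
  have "\<forall>\<^sub>F s in at_top. s\<^sup>2 * integral {0..d} (\<lambda>t. exp (- s * t) * h t) < - e / 2"
  proof (rule laplace_eventually_less[OF h(1) \<open>0 < d\<close> _ \<open>0 < e\<close>])
    show "integral {0..t} h \<le> (c - G x) * t - e * t\<^sup>2 / 2" if "0 \<le> t" "t \<le> d" for t
      using h(2)[OF that] bound[OF that] by (simp add: left_diff_distrib)
  qed (use \<open>\<not> G x < c\<close> \<open>0 < d\<close> in auto)
  then have "\<forall>\<^sub>F s in at_top. lap_R G x d s < - e / 2"
    by (simp add: lap_R_def h_def)
  moreover have "\<forall>\<^sub>F s in at_top. - e / 2 < lap_R G x d s"
    using nonneg \<open>0 < e\<close> unfolding le_Liminf_iff by (auto elim!: allE[of _ "ereal (- e / 2)"])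
  ultimately have "\<forall>\<^sub>F s in at_top. lap_R G x d s < - e / 2 \<and> - e / 2 < lap_R G x d s"
    by (rule eventually_conj)
  then show False
    by (auto dest: eventually_happens)
qed

lemma lap_L_nonneg_imp_greater:
  fixes G :: "real \<Rightarrow> real"
  assumes G: "G integrable_on {x - d..x}" and "0 < d" "0 < e"
    and bound: "\<And>t. 0 \<le> t \<Longrightarrow> t \<le> d \<Longrightarrow> c * t + e * t\<^sup>2 / 2 \<le> integral {x - t..x} G"
    and nonneg: "0 \<le> Liminf at_top (\<lambda>s. ereal (lap_L G x d s))"
  shows "c < G x"
proof -
  have "- G (- (- x)) < - c"
  proof (rule lap_R_nonneg_imp_less[OF integrable_reflect_uminus[OF G] \<open>0 < d\<close> \<open>0 < e\<close>])
    show "integral {- x..- x + t} (\<lambda>z. - G (- z)) \<le> - c * t - e * t\<^sup>2 / 2"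
      if "0 \<le> t" "t \<le> d" for t
      using bound[OF that] integral_reflect_uminus[of x t G] by simp
  qed (use nonneg in \<open>simp add: lap_L_reflect\<close>)
  then show ?thesis by simp
qed

lemma max_point_integral_minus_affine:
  fixes G :: "real \<Rightarrow> real"
  assumes "p \<le> q" and G: "G integrable_on {p..q}"
  obtains x where "x \<in> {p..q}"
    and "\<And>t. 0 \<le> t \<Longrightarrow> x + t \<le> q \<Longrightarrow> integral {x..x + t} G \<le> (k - e * x) * t - e * t\<^sup>2 / 2"
    and "\<And>t. 0 \<le> t \<Longrightarrow> p \<le> x - t \<Longrightarrow> (k - e * x) * t + e * t\<^sup>2 / 2 \<le> integral {x - t..x} G"
proof -
  define \<Psi> where "\<Psi> y = integral {p..y} G - k * y + e * y\<^sup>2 / 2" for y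
  have "continuous_on {p..q} \<Psi>"
    unfolding \<Psi>_def by (intro continuous_intros indefinite_integral_continuous_1[OF G]) auto
  then obtain x where x: "x \<in> {p..q}" and max: "\<And>y. y \<in> {p..q} \<Longrightarrow> \<Psi> y \<le> \<Psi> x"
    using continuous_attains_sup[of "{p..q}" \<Psi>] \<open>p \<le> q\<close> by auto
  have \<Psi>_diff: "\<Psi> v - \<Psi> u = integral {u..v} G - k * (v - u) + e * (v\<^sup>2 - u\<^sup>2) / 2"
    if "p \<le> u" "u \<le> v" "v \<le> q" for u v
  proof -
    have "G integrable_on {p..v}"
      using integrable_subinterval_real[OF G] that by auto
    then have "integral {p..v} G = integral {p..u} G + integral {u..v} G"
      using Henstock_Kurzweil_Integration.integral_combine[of p u v G] that by auto
    then show ?thesis by (simp add: \<Psi>_def algebra_simps diff_divide_distrib)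
  qed
  show ?thesis
  proof (rule that[OF x])
    show "integral {x..x + t} G \<le> (k - e * x) * t - e * t\<^sup>2 / 2" if "0 \<le> t" "x + t \<le> q" for t
      using max[of "x + t"] \<Psi>_diff[of x "x + t"] x that by (simp add: power2_eq_square field_simps)
    show "(k - e * x) * t + e * t\<^sup>2 / 2 \<le> integral {x - t..x} G" if "0 \<le> t" "p \<le> x - t" for t
      using max[of "x - t"] \<Psi>_diff[of "x - t" x] x that by (simp add: power2_eq_square field_simps)
  qed
qed

lemma le_if_lap_derivates_nonneg:
  fixes G :: "real \<Rightarrow> real"
  assumes "p \<le> q" and G: "G integrable_on {p..q}"
    and right: "\<And>y. p \<le> y \<Longrightarrow> y < q \<Longrightarrow>
      \<exists>d>0. y + d \<le> q \<and> 0 \<le> Liminf at_top (\<lambda>s. ereal (lap_R G y d s))"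
    and left: "\<And>y. p < y \<Longrightarrow> y \<le> q \<Longrightarrow>
      \<exists>d>0. p \<le> y - d \<and> 0 \<le> Liminf at_top (\<lambda>s. ereal (lap_L G y d s))"
  shows "G p \<le> G q"
proof (rule ccontr)
  assume "\<not> G p \<le> G q"
  with \<open>p \<le> q\<close> have "p < q" by (cases "p = q") auto
  define e where "e = (G p - G q) / (q - p)"
  define k where "k = G p + e * p"
  have "0 < e"
    using \<open>\<not> G p \<le> G q\<close> \<open>p < q\<close> by (simp add: e_def)
  have "e * (q - p) = G p - G q"
    using \<open>p < q\<close> by (simp add: e_def)
  then have "k - e * q = G q"
    by (simp add: k_def right_diff_distrib)
  obtain x where x: "x \<in> {p..q}"
    and below: "\<And>t. 0 \<le> t \<Longrightarrow> x + t \<le> q \<Longrightarrow> integral {x..x + t} G \<le> (k - e * x) * t - e * t\<^sup>2 / 2"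
    and above: "\<And>t. 0 \<le> t \<Longrightarrow> p \<le> x - t \<Longrightarrow> (k - e * x) * t + e * t\<^sup>2 / 2 \<le> integral {x - t..x} G"
    using max_point_integral_minus_affine[OF \<open>p \<le> q\<close> G, where k = k and e = e] by blast
  have right_less: "G x < k - e * x" if "x < q"
  proof -
    obtain d where d: "0 < d" "x + d \<le> q" "0 \<le> Liminf at_top (\<lambda>s. ereal (lap_R G x d s))"
      using right[of x] x \<open>x < q\<close> by auto
    show ?thesis
    proof (rule lap_R_nonneg_imp_less[OF _ d(1) \<open>0 < e\<close> below d(3)])
      show "G integrable_on {x..x + d}"
        using integrable_subinterval_real[OF G] x d by auto
    qed (use d in auto)
  qed
  have left_greater: "k - e * x < G x" if "p < x"
  proof -
    obtain d where d: "0 < d" "p \<le> x - d" "0 \<le> Liminf at_top (\<lambda>s. ereal (lap_L G x d s))"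
      using left[of x] x \<open>p < x\<close> by auto
    show ?thesis
    proof (rule lap_L_nonneg_imp_greater[OF _ d(1) \<open>0 < e\<close> above d(3)])
      show "G integrable_on {x - d..x}"
        using integrable_subinterval_real[OF G] x d by auto
    qed (use d in auto)
  qed
  show False
    using right_less left_greater x \<open>k - e * q = G q\<close> \<open>p < q\<close>
    by (cases "x = p"; cases "x = q") (auto simp: k_def)
qed

lemma lap_R_truncation_tendsto_zero:
  fixes G :: "real \<Rightarrow> real"
  assumes "G integrable_on {y..y + d}" "0 < \<tau>" "\<tau> \<le> d"
  shows "((\<lambda>s. lap_R G y d s - lap_R G y \<tau> s) \<longlongrightarrow> 0) at_top"
proof -
  have "(\<lambda>t. G (y + t) - G y) integrable_on {0..d}"
    using integral_shift_origin(1)[OF assms(1)] by (intro integrable_diff) auto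
  from laplace_truncation_tendsto_zero[OF this assms(2,3)] show ?thesis
    by (simp add: lap_R_def)
qed

lemma lap_L_truncation_tendsto_zero:
  fixes G :: "real \<Rightarrow> real"
  assumes "G integrable_on {y - d..y}" "0 < \<tau>" "\<tau> \<le> d"
  shows "((\<lambda>s. lap_L G y d s - lap_L G y \<tau> s) \<longlongrightarrow> 0) at_top"
  using lap_R_truncation_tendsto_zero[OF integrable_reflect_uminus[OF assms(1)] assms(2,3)]
  by (simp add: lap_L_reflect)

lemma lap_R_diff:
  fixes U F :: "real \<Rightarrow> real"
  assumes "U integrable_on {y..y + d}" "F integrable_on {y..y + d}" "0 \<le> s"
  shows "lap_R (\<lambda>z. U z - F z) y d s = lap_R U y d s - lap_R F y d s"
proof -
  have "(\<lambda>t. exp (- s * t) * (G (y + t) - G y)) integrable_on {0..d}"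
    if "G integrable_on {y..y + d}" for G :: "real \<Rightarrow> real"
    using integral_shift_origin(1)[OF that] \<open>0 \<le> s\<close> by (intro integrable_exp_weight integrable_diff) auto
  moreover have "(\<lambda>t. exp (- s * t) * (U (y + t) - F (y + t) - (U y - F y)))
      = (\<lambda>t. exp (- s * t) * (U (y + t) - U y) - exp (- s * t) * (F (y + t) - F y))"
    by (simp add: algebra_simps)
  ultimately show ?thesis
    using assms by (simp add: lap_R_def integral_diff right_diff_distrib)
qed

lemma Liminf_ge_if_diff_tendsto:
  fixes u w :: "real \<Rightarrow> real"
  assumes u: "ereal c \<le> Liminf at_top (\<lambda>s. ereal (u s))"
    and diff: "((\<lambda>s. u s - w s) \<longlongrightarrow> l) at_top"
  shows "ereal (c - l) \<le> Liminf at_top (\<lambda>s. ereal (w s))"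
  unfolding le_Liminf_iff
proof (intro allI impI)
  fix y assume "y < ereal (c - l)"
  then obtain r where r: "y < ereal r" "r < c - l"
    using ereal_dense2 by fastforce
  define \<delta> where "\<delta> = (c - l - r) / 2"
  have "0 < \<delta>" using r(2) by (simp add: \<delta>_def)
  have "\<forall>\<^sub>F s in at_top. ereal (c - \<delta>) < ereal (u s)"
    using u \<open>0 < \<delta>\<close> unfolding le_Liminf_iff by (auto elim!: allE[of _ "ereal (c - \<delta>)"])
  moreover have "\<forall>\<^sub>F s in at_top. u s - w s < l + \<delta>"
    using order_tendstoD(2)[OF diff] \<open>0 < \<delta>\<close> by simp
  ultimately show "\<forall>\<^sub>F s in at_top. y < ereal (w s)"
  proof eventually_elim
    case (elim s)
    then have "r < w s" by (simp add: \<delta>_def field_simps)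
    with r(1) show ?case by (metis ereal_less_eq(3) order_less_le_trans less_imp_le)
  qed
qed

lemma Liminf_lap_R_truncate:
  fixes G :: "real \<Rightarrow> real"
  assumes "G integrable_on {y..y + d}" "0 < \<tau>" "\<tau> \<le> d"
    and "ereal c \<le> Liminf at_top (\<lambda>s. ereal (lap_R G y d s))"
  shows "ereal c \<le> Liminf at_top (\<lambda>s. ereal (lap_R G y \<tau> s))"
  using Liminf_ge_if_diff_tendsto[OF assms(4) lap_R_truncation_tendsto_zero[OF assms(1-3)]] by simp

lemma Liminf_lap_L_truncate:
  fixes G :: "real \<Rightarrow> real"
  assumes "G integrable_on {y - d..y}" "0 < \<tau>" "\<tau> \<le> d"
    and "ereal c \<le> Liminf at_top (\<lambda>s. ereal (lap_L G y d s))"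
  shows "ereal c \<le> Liminf at_top (\<lambda>s. ereal (lap_L G y \<tau> s))"
  using Liminf_ge_if_diff_tendsto[OF assms(4) lap_L_truncation_tendsto_zero[OF assms(1-3)]] by simp

lemma Liminf_lap_R_diff_nonneg:
  fixes U F :: "real \<Rightarrow> real"
  assumes U: "U integrable_on {y..y + dU}" and F: "F integrable_on {y..y + dF}"
    and U_lim: "ereal c \<le> Liminf at_top (\<lambda>s. ereal (lap_R U y dU s))"
    and F_lim: "(lap_R F y dF \<longlongrightarrow> c) at_top"
    and d: "0 < d" "d \<le> dU" "d \<le> dF"
  shows "0 \<le> Liminf at_top (\<lambda>s. ereal (lap_R (\<lambda>z. U z - F z) y d s))"
proof -
  have "U integrable_on {y..y + d}" "F integrable_on {y..y + d}"
    using integrable_subinterval_real[OF U] integrable_subinterval_real[OF F] d by auto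
  then have "\<forall>\<^sub>F s in at_top. lap_R F y d s = lap_R U y d s - lap_R (\<lambda>z. U z - F z) y d s"
    by (intro eventually_mono[OF eventually_ge_at_top[of 0]]) (simp add: lap_R_diff)
  moreover have "(lap_R F y d \<longlongrightarrow> c) at_top"
    using tendsto_diff[OF F_lim lap_R_truncation_tendsto_zero[OF F d(1,3)]] by simp
  ultimately have diff: "((\<lambda>s. lap_R U y d s - lap_R (\<lambda>z. U z - F z) y d s) \<longlongrightarrow> c) at_top"
    by (rule Lim_transform_eventually[rotated])
  have "ereal c \<le> Liminf at_top (\<lambda>s. ereal (lap_R U y d s))"
    by (rule Liminf_lap_R_truncate[OF U d(1,2) U_lim])
  from Liminf_ge_if_diff_tendsto[OF this diff] show ?thesis
    by (simp add: zero_ereal_def)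
qed

lemma Liminf_lap_L_diff_nonneg:
  fixes U F :: "real \<Rightarrow> real"
  assumes U: "U integrable_on {y - dU..y}" and F: "F integrable_on {y - dF..y}"
    and U_lim: "ereal c \<le> Liminf at_top (\<lambda>s. ereal (lap_L U y dU s))"
    and F_lim: "(lap_L F y dF \<longlongrightarrow> c) at_top"
    and d: "0 < d" "d \<le> dU" "d \<le> dF"
  shows "0 \<le> Liminf at_top (\<lambda>s. ereal (lap_L (\<lambda>z. U z - F z) y d s))"
proof -
  have reflect: "lap_L (\<lambda>z. U z - F z) y d s = lap_R (\<lambda>z. - U (- z) - - F (- z)) (- y) d s" for s
    by (simp add: lap_L_reflect)
  show ?thesis
    unfolding reflect
    by (rule Liminf_lap_R_diff_nonneg[OF integrable_reflect_uminus[OF U] integrable_reflect_uminus[OF F] _ _ d])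
      (use U_lim F_lim in \<open>simp_all add: lap_L_reflect\<close>)
qed

section \<open>Major and minor functions\<close>

lemma le_lower_LD1_iff:
  "c \<le> lower_LD1 a b U y d \<longleftrightarrow>
     (y < b \<longrightarrow> c \<le> Liminf at_top (\<lambda>s. ereal (lap_R U y d s))) \<and>
     (a < y \<longrightarrow> c \<le> Liminf at_top (\<lambda>s. ereal (lap_L U y d s)))"
  unfolding lower_LD1_def le_Inf_iff by blast

lemma upper_LD1_uminus: "upper_LD1 a b V y d = - lower_LD1 a b (\<lambda>z. - V z) y d"
proof -
  have R: "Liminf at_top (\<lambda>s. ereal (lap_R (\<lambda>z. - V z) y d s)) = - Limsup at_top (\<lambda>s. ereal (lap_R V y d s))"
    using ereal_Liminf_uminus[of at_top "\<lambda>s. ereal (lap_R V y d s)"] by (simp add: lap_R_uminus)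
  have L: "Liminf at_top (\<lambda>s. ereal (lap_L (\<lambda>z. - V z) y d s)) = - Limsup at_top (\<lambda>s. ereal (lap_L V y d s))"
    using ereal_Liminf_uminus[of at_top "\<lambda>s. ereal (lap_L V y d s)"] by (simp add: lap_L_uminus)
  show ?thesis
    by (cases "y < b"; cases "a < y")
      (auto simp: lower_LD1_def upper_LD1_def R L min_def max_def top_ereal_def bot_ereal_def)
qed

lemma lap_adm_uminus: "lap_adm a b (\<lambda>z. - V z) y d \<longleftrightarrow> lap_adm a b V y d"
  unfolding lap_adm_def by (simp add: integrable_neg_iff)

lemma lap_minor_iff_lap_major_uminus:
  "lap_minor a b f V \<longleftrightarrow> lap_major a b (\<lambda>z. - f z) (\<lambda>z. - V z)"
proof -
  have "continuous_on {a..b} V \<longleftrightarrow> continuous_on {a..b} (\<lambda>z. - V z)"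
    using continuous_on_minus[of "{a..b}" V] continuous_on_minus[of "{a..b}" "\<lambda>z. - V z"] by auto
  then show ?thesis
    unfolding lap_minor_def lap_major_def lap_adm_uminus upper_LD1_uminus
    by (simp add: ereal_uminus_le_reorder ereal_uminus_eq_reorder)
qed

lemma has_LD1_uminus: "has_LD1 a b F y D \<Longrightarrow> has_LD1 a b (\<lambda>z. - F z) y (- D)"
  unfolding has_LD1_def lap_adm_uminus lap_R_uminus lap_L_uminus by (auto intro: tendsto_minus)

lemma Liminf_lap_R_major_diff_nonneg:
  fixes F f U :: "real \<Rightarrow> real"
  assumes U: "lap_major a c f U" and F: "has_LD1 a b F y (f y)"
    and "y \<in> {a..c}" "y < c" "y < b" "0 < r"
  shows "\<exists>d>0. d \<le> r \<and> 0 \<le> Liminf at_top (\<lambda>s. ereal (lap_R (\<lambda>z. U z - F z) y d s))"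
proof -
  obtain dU where dU: "0 < dU" "U integrable_on {y..y + dU}"
    "ereal (f y) \<le> Liminf at_top (\<lambda>s. ereal (lap_R U y dU s))"
    using U \<open>y \<in> {a..c}\<close> \<open>y < c\<close> unfolding lap_major_def lap_adm_def le_lower_LD1_iff by blast
  obtain dF where dF: "0 < dF" "F integrable_on {y..y + dF}" "(lap_R F y dF \<longlongrightarrow> f y) at_top"
    using F \<open>y < b\<close> unfolding has_LD1_def lap_adm_def by blast
  show ?thesis
    using Liminf_lap_R_diff_nonneg[OF dU(2) dF(2) dU(3) dF(3), of "min (min dU dF) r"] dU dF \<open>0 < r\<close>
    by (intro exI[of _ "min (min dU dF) r"]) auto
qed

lemma Liminf_lap_L_major_diff_nonneg:
  fixes F f U :: "real \<Rightarrow> real"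
  assumes U: "lap_major a c f U" and F: "has_LD1 a b F y (f y)"
    and "y \<in> {a..c}" "a < y" "0 < r"
  shows "\<exists>d>0. d \<le> r \<and> 0 \<le> Liminf at_top (\<lambda>s. ereal (lap_L (\<lambda>z. U z - F z) y d s))"
proof -
  obtain dU where dU: "0 < dU" "U integrable_on {y - dU..y}"
    "ereal (f y) \<le> Liminf at_top (\<lambda>s. ereal (lap_L U y dU s))"
    using U \<open>y \<in> {a..c}\<close> \<open>a < y\<close> unfolding lap_major_def lap_adm_def le_lower_LD1_iff by blast
  obtain dF where dF: "0 < dF" "F integrable_on {y - dF..y}" "(lap_L F y dF \<longlongrightarrow> f y) at_top"
    using F \<open>a < y\<close> unfolding has_LD1_def lap_adm_def by blast
  show ?thesis
    using Liminf_lap_L_diff_nonneg[OF dU(2) dF(2) dU(3) dF(3), of "min (min dU dF) r"] dU dF \<open>0 < r\<close>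
    by (intro exI[of _ "min (min dU dF) r"]) auto
qed

lemma integrable_if_lap_adm:
  fixes F :: "real \<Rightarrow> real"
  assumes adm: "\<And>x. x \<in> {a..b} \<Longrightarrow> \<exists>d. lap_adm a b F x d"
  shows "F integrable_on {a..b}"
proof -
  have "\<exists>d>0. \<forall>u v. x \<in> cbox u v \<and> cbox u v \<subseteq> ball x d \<and> cbox u v \<subseteq> cbox a b \<longrightarrow>
      F integrable_on cbox u v" if x: "x \<in> cbox a b" for x
  proof -
    obtain d where d: "lap_adm a b F x d"
      using adm x by auto
    have "F integrable_on {x}"
      using integrable_on_refl[of F x] by simp
    have "F integrable_on {u..v}" if uv: "x \<in> {u..v}" "{u..v} \<subseteq> ball x d" "{u..v} \<subseteq> {a..b}" for u v
    proof -
      have "u \<in> {u..v}" "v \<in> {u..v}"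
        using uv(1) by auto
      then have "u \<in> ball x d" "v \<in> ball x d" "u \<in> {a..b}" "v \<in> {a..b}"
        using uv(2,3) by blast+
      then have "x - d < u" "v < x + d" "a \<le> u" "v \<le> b"
        by (auto simp: dist_real_def)
      then have "F integrable_on {u..x}"
        using d uv(1) integrable_subinterval_real[of F "x - d" x u x] \<open>F integrable_on {x}\<close>
        by (cases "u = x") (auto simp: lap_adm_def)
      moreover have "F integrable_on {x..v}"
        using d uv(1) integrable_subinterval_real[of F x "x + d" x v] \<open>F integrable_on {x}\<close>
          \<open>v < x + d\<close> \<open>v \<le> b\<close>
        by (cases "x = v") (auto simp: lap_adm_def)
      ultimately show ?thesis
        using Henstock_Kurzweil_Integration.integrable_combine[of u x v F] uv(1) by auto
    qed
    with d show ?thesis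
      by (auto simp: lap_adm_def)
  qed
  then show ?thesis
    using integrable_on_little_subintervals[of a b F] by simp
qed

lemma major_increment_ge:
  fixes F f U :: "real \<Rightarrow> real"
  assumes F: "\<forall>x\<in>{a..b}. has_LD1 a b F x (f x)" and U: "lap_major a c f U"
    and "a \<le> p" "p \<le> q" "q \<le> c" "c \<le> b"
  shows "F q - F p \<le> U q - U p"
proof -
  have "(\<lambda>z. U z - F z) p \<le> (\<lambda>z. U z - F z) q"
  proof (rule le_if_lap_derivates_nonneg[OF \<open>p \<le> q\<close>])
    have "continuous_on {p..q} U"
      using U \<open>a \<le> p\<close> \<open>q \<le> c\<close> unfolding lap_major_def by (auto elim: continuous_on_subset)
    then have "U integrable_on {p..q}"
      by (rule integrable_continuous_real)
    moreover have "F integrable_on {p..q}"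
      using integrable_subinterval_real[OF integrable_if_lap_adm] F assms(3-6)
      unfolding has_LD1_def by fastforce
    ultimately show "(\<lambda>z. U z - F z) integrable_on {p..q}"
      by (rule integrable_diff)
  next
    fix y assume "p \<le> y" "y < q"
    then have "y \<in> {a..b}" "y \<in> {a..c}" "y < c" "y < b" "0 < q - y"
      using assms(3-6) by auto
    from Liminf_lap_R_major_diff_nonneg[OF U F[rule_format, OF this(1)] this(2-5)]
    show "\<exists>d>0. y + d \<le> q \<and> 0 \<le> Liminf at_top (\<lambda>s. ereal (lap_R (\<lambda>z. U z - F z) y d s))"
      by auto
  next
    fix y assume "p < y" "y \<le> q"
    then have "y \<in> {a..b}" "y \<in> {a..c}" "a < y" "0 < y - p"
      using assms(3-6) by auto
    from Liminf_lap_L_major_diff_nonneg[OF U F[rule_format, OF this(1)] this(2-4)]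
    show "\<exists>d>0. p \<le> y - d \<and> 0 \<le> Liminf at_top (\<lambda>s. ereal (lap_L (\<lambda>z. U z - F z) y d s))"
      by auto
  qed
  then show ?thesis by simp
qed

lemma minor_increment_le:
  fixes F f V :: "real \<Rightarrow> real"
  assumes F: "\<forall>x\<in>{a..b}. has_LD1 a b F x (f x)" and V: "lap_minor a c f V"
    and "a \<le> p" "p \<le> q" "q \<le> c" "c \<le> b"
  shows "V q - V p \<le> F q - F p"
proof -
  have "\<forall>x\<in>{a..b}. has_LD1 a b (\<lambda>z. - F z) x (- f x)"
    using F by (simp add: has_LD1_uminus)
  from major_increment_ge[OF this V[unfolded lap_minor_iff_lap_major_uminus] assms(3-6)]
  show ?thesis by simp
qed

lemma lap_adm_restrict:
  assumes d: "lap_adm a b U y d" and "x \<le> b" "0 < d'" "d' \<le> d" "y < x \<Longrightarrow> y + d' \<le> x"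
  shows "lap_adm a x U y d'"
  unfolding lap_adm_def
proof (intro conjI impI)
  assume "y < x"
  then have "U integrable_on {y..y + d}"
    using d \<open>x \<le> b\<close> by (simp add: lap_adm_def)
  then show "U integrable_on {y..y + d'}"
    using \<open>0 < d'\<close> \<open>d' \<le> d\<close> by (auto intro: integrable_subinterval_real)
  show "y + d' \<le> x"
    using \<open>y < x\<close> assms(5) by blast
next
  assume "a < y"
  then have "U integrable_on {y - d..y}" "a \<le> y - d"
    using d by (simp_all add: lap_adm_def)
  then show "U integrable_on {y - d'..y}" "a \<le> y - d'"
    using \<open>0 < d'\<close> \<open>d' \<le> d\<close> by (auto intro: integrable_subinterval_real)
qed (rule \<open>0 < d'\<close>)

lemma lower_LD1_restrict:
  assumes d: "lap_adm a b U y d" "ereal c \<le> lower_LD1 a b U y d"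
    and "x \<le> b" "0 < d'" "d' \<le> d"
  shows "ereal c \<le> lower_LD1 a x U y d'"
  unfolding le_lower_LD1_iff
proof (intro conjI impI)
  assume "y < x"
  with d \<open>x \<le> b\<close> have "U integrable_on {y..y + d}" "ereal c \<le> Liminf at_top (\<lambda>s. ereal (lap_R U y d s))"
    unfolding lap_adm_def le_lower_LD1_iff by auto
  then show "ereal c \<le> Liminf at_top (\<lambda>s. ereal (lap_R U y d' s))"
    using Liminf_lap_R_truncate \<open>0 < d'\<close> \<open>d' \<le> d\<close> by blast
next
  assume "a < y"
  with d have "U integrable_on {y - d..y}" "ereal c \<le> Liminf at_top (\<lambda>s. ereal (lap_L U y d s))"
    unfolding lap_adm_def le_lower_LD1_iff by auto
  then show "ereal c \<le> Liminf at_top (\<lambda>s. ereal (lap_L U y d' s))"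
    using Liminf_lap_L_truncate \<open>0 < d'\<close> \<open>d' \<le> d\<close> by blast
qed

lemma lap_major_restrict:
  assumes U: "lap_major a b f U" and "x \<le> b"
  shows "lap_major a x f U"
  unfolding lap_major_def
proof (intro conjI ballI)
  show "continuous_on {a..x} U"
    using U \<open>x \<le> b\<close> continuous_on_subset[of "{a..b}" U "{a..x}"] by (auto simp: lap_major_def)
  fix y assume y: "y \<in> {a..x}"
  obtain d where d: "lap_adm a b U y d" "ereal (f y) \<le> lower_LD1 a b U y d"
    using U y \<open>x \<le> b\<close> unfolding lap_major_def by fastforce
  define d' where "d' = (if y < x then min d (x - y) else d)"
  have "0 < d'" "d' \<le> d"
    using d(1) by (auto simp: d'_def lap_adm_def)
  then have "lap_adm a x U y d'" "ereal (f y) \<le> lower_LD1 a x U y d'"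
    using lap_adm_restrict[OF d(1) \<open>x \<le> b\<close>] lower_LD1_restrict[OF d \<open>x \<le> b\<close>] by (auto simp: d'_def)
  then show "\<exists>\<delta>. lap_adm a x U y \<delta> \<and> ereal (f y) \<le> lower_LD1 a x U y \<delta> \<and> - \<infinity> < lower_LD1 a x U y \<delta>"
    by (intro exI[of _ d']) (auto simp: order_less_le_trans)
qed

lemma lap_minor_restrict: "lap_minor a b f V \<Longrightarrow> x \<le> b \<Longrightarrow> lap_minor a x f V"
  unfolding lap_minor_iff_lap_major_uminus by (rule lap_major_restrict)

section \<open>The Laplace integral\<close>

lemma Inf_ereal_image_eqI:
  fixes M :: "real set"
  assumes "\<And>m. m \<in> M \<Longrightarrow> c \<le> m" and "\<And>e. 0 < e \<Longrightarrow> \<exists>m\<in>M. m < c + e"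
  shows "Inf (ereal ` M) = ereal c"
proof (rule antisym)
  show "Inf (ereal ` M) \<le> ereal c"
  proof (rule ereal_le_epsilon2)
    fix e :: real assume "0 < e"
    then obtain m where "m \<in> M" "m < c + e"
      using assms(2) by blast
    then have "Inf (ereal ` M) \<le> ereal m" and "ereal m \<le> ereal c + ereal e"
      by (auto intro: Inf_lower)
    then show "Inf (ereal ` M) \<le> ereal c + ereal e" by (rule order_trans)
  qed
  show "ereal c \<le> Inf (ereal ` M)"
    using assms(1) by (auto intro: Inf_greatest)
qed

lemma Sup_ereal_image_eqI:
  fixes M :: "real set"
  assumes "\<And>m. m \<in> M \<Longrightarrow> m \<le> c" and "\<And>e. 0 < e \<Longrightarrow> \<exists>m\<in>M. c - e < m"
  shows "Sup (ereal ` M) = ereal c"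
proof -
  have "Inf (ereal ` uminus ` M) = ereal (- c)"
  proof (rule Inf_ereal_image_eqI)
    show "- c \<le> m" if "m \<in> uminus ` M" for m
      using assms(1) that by auto
    show "\<exists>m\<in>uminus ` M. m < - c + e" if "0 < e" for e
      using assms(2)[OF that] by force
  qed
  moreover have "ereal ` uminus ` M = uminus ` ereal ` M"
    by (auto simp: image_image)
  ultimately show ?thesis
    by (simp add: ereal_Inf_uminus_image_eq ereal_uminus_eq_reorder)
qed

lemma lap_integral_eqI:
  assumes "\<And>U. lap_major a b f U \<Longrightarrow> I \<le> U b - U a"
    and "\<And>V. lap_minor a b f V \<Longrightarrow> V b - V a \<le> I"
    and "\<And>e. 0 < e \<Longrightarrow> \<exists>U. lap_major a b f U \<and> U b - U a < I + e"
    and "\<And>e. 0 < e \<Longrightarrow> \<exists>V. lap_minor a b f V \<and> I - e < V b - V a"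
  shows "lap_integrable a b f \<and> lap_integral a b f = I"
proof -
  have "Inf (ereal ` {U b - U a | U. lap_major a b f U}) = ereal I"
    using assms(1,3) by (intro Inf_ereal_image_eqI) blast+
  moreover have "Sup (ereal ` {V b - V a | V. lap_minor a b f V}) = ereal I"
    using assms(2,4) by (intro Sup_ereal_image_eqI) blast+
  ultimately show ?thesis
    by (simp add: lap_integrable_def lap_integral_def)
qed

lemma lap_integrable_approx:
  assumes "lap_integrable a b f"
    and "\<And>U. lap_major a b f U \<Longrightarrow> I \<le> U b - U a"
    and "\<And>V. lap_minor a b f V \<Longrightarrow> V b - V a \<le> I"
    and "0 < e"
  shows "\<exists>U. lap_major a b f U \<and> U b - U a < I + e"
    and "\<exists>V. lap_minor a b f V \<and> I - e < V b - V a"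
proof -
  let ?Mj = "ereal ` {U b - U a | U. lap_major a b f U}"
  let ?Mn = "ereal ` {V b - V a | V. lap_minor a b f V}"
  have "Sup ?Mn \<le> ereal I"
    using assms(3) by (auto intro!: Sup_least)
  moreover have "ereal I \<le> Inf ?Mj"
    using assms(2) by (auto intro!: Inf_greatest)
  moreover have "Sup ?Mn = Inf ?Mj"
    using assms(1) by (simp add: lap_integrable_def Let_def)
  ultimately have "Inf ?Mj < ereal (I + e)" "ereal (I - e) < Sup ?Mn"
    using \<open>0 < e\<close> by auto
  then show "\<exists>U. lap_major a b f U \<and> U b - U a < I + e" "\<exists>V. lap_minor a b f V \<and> I - e < V b - V a"
    by (auto simp: Inf_less_iff less_Sup_iff)
qed

theorem theorem5p4:
  fixes F f :: "real \<Rightarrow> real" and a b :: real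
  assumes "\<forall>x\<in>{a..b}. has_LD1 a b F x (f x)"
    and "lap_integrable a b f"
  shows "\<forall>x\<in>{a..b}. lap_integrable a x f \<and> lap_integral a x f = F x - F a"
proof
  fix x assume x: "x \<in> {a..b}"
  note major_ge = major_increment_ge[OF assms(1)] and minor_le = minor_increment_le[OF assms(1)]
  show "lap_integrable a x f \<and> lap_integral a x f = F x - F a"
  proof (rule lap_integral_eqI)
    fix e :: real assume "0 < e"
    then obtain U where U: "lap_major a b f U" "U b - U a < F b - F a + e"
      using lap_integrable_approx(1)[OF assms(2) major_ge minor_le] x by fastforce
    moreover have "F b - F x \<le> U b - U x"
      using major_ge[OF U(1)] x by auto
    ultimately show "\<exists>U. lap_major a x f U \<and> U x - U a < F x - F a + e"
      using lap_major_restrict[of a b f U x] x by (intro exI[of _ U]) auto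
  next
    fix e :: real assume "0 < e"
    then obtain V where V: "lap_minor a b f V" "F b - F a - e < V b - V a"
      using lap_integrable_approx(2)[OF assms(2) major_ge minor_le] x by fastforce
    moreover have "V b - V x \<le> F b - F x"
      using minor_le[OF V(1)] x by auto
    ultimately show "\<exists>V. lap_minor a x f V \<and> F x - F a - e < V x - V a"
      using lap_minor_restrict[of a b f V x] x by (intro exI[of _ V]) auto
  qed (use major_ge minor_le x in auto)
qed

end
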